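(* Let $\mathcal{G}$ be a multi-layer graph with $l$ layers, $d,s,k\in\mathbb{N}$ with $k\ge1$, and $\mathcal{R}$ a collection of exactly $k$ subsets of $V(\mathcal{G})$. Let $L\subseteq\{1,\dots,l\}$ with $|L|>s$, and let $U$ be a potential vertex set for $L$, i.e., $C^d_S(\mathcal{G})\subseteq U$ for every top-down descendant $S$ of $L$ with $|S|=s$. Suppose $|\mathsf{Cov}((\mathcal{R}-\{C^*(\mathcal{R})\})\cup\{C^d_L(\mathcal{G})\})|\ge(1+\frac1k)|\mathsf{Cov}(\mathcal{R})|$ and $|U|<(\frac1k+\frac1{k^2})|\mathsf{Cov}(\mathcal{R})|+(1+\frac1k)|\Delta(\mathcal{R},C^*(\mathcal{R}))|$. Let $S_1,S_2$ be top-down descendants of $L$ with $|S_1|=|S_2|=s$ and $C^d_{S_1}(\mathcal{G})\neq C^d_{S_2}(\mathcal{G})$. If $C^d_{S_1}(\mathcal{G})$ satisfies $|\mathsf{Cov}((\mathcal{R}-\{C^*(\mathcal{R})\})\cup\{C^d_{S_1}(\mathcal{G})\})|\ge(1+\frac1k)|\mathsf{Cov}(\mathcal{R})|$ and $\mathcal{R}'=(\mathcal{R}-\{C^*(\mathcal{R})\})\cup\{C^d_{S_1}(\mathcal{G})\}$ is the updated collection, then $|\mathsf{Cov}((\mathcal{R}'-\{C^*(\mathcal{R}')\})\cup\{C^d_{S_2}(\mathcal{G})\})|<(1+\frac1k)|\mathsf{Cov}(\mathcal{R}')|$, i.e., $C^d_{S_2}(\mathcal{G})$ cannot update $\mathc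al{R}'$.
   Context: A multi-layer graph $\mathcal{G}=(V,E_1,\dots,E_l)$ consists of a finite vertex set $V$ and edge sets $E_i$ of simple undirected graphs $G_i=(V,E_i)$. A graph is $d$-dense if every vertex has degree at least $d$; the $d$-coherent core $C^d_L(\mathcal{G})$ is the unique maximal $S\subseteq V$ such that the induced subgraph $G_i[S]$ is $d$-dense for all $i\in L$. Top-down search tree: $L$ is the parent of $L'$ if $L'=L-\{\ell\}$ for some $\ell\in L$ with $\ell>\max(\{1,\dots,l\}-L)$ ($\max(\emptyset)=-\infty$); top-down descendants are obtained by iterating the child relation. For a collection $\mathcal{R}$ of sets, $\mathsf{Cov}(\mathcal{R})=\bigcup_{R\in\mathcal{R}}R$; for $C'\in\mathcal{R}$, $\Delta(\mathcal{R},C')=C'-\mathsf{Cov}(\mathcal{R}-\{C'\})$; $C^*(\mathcal{R})$ is a fixed element of $\mathcal{R}$ minimizing $|\Delta(\mathcal{R},C')|$. A set $C$ "updates" a $k$-element collection $\mathcal{R}$ if $|\mathsf{Cov}((\mathcal{R}-\{C^*(\mathcal{R})\})\cup\{C\})|\ge(1+\frac1k)|\mathsf{Cov}(\mathcal{R})|$, in which case $C^*(\mathcal{R})$ is replaced by $C$. *)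

theory Defs
  imports Main "HOL-Library.Extended_Real"
begin

definition multilayer_graph :: "'a set \<Rightarrow> (nat \<Rightarrow> 'a set set) \<Rightarrow> nat \<Rightarrow> bool" where
  "multilayer_graph V E l \<longleftrightarrow> finite V \<and>
     (\<forall>i\<in>{1..l}. E i \<subseteq> {e. \<exists>u v. e = {u, v} \<and> u \<noteq> v \<and> u \<in> V \<and> v \<in> V})"

definition dense_induced :: "(nat \<Rightarrow> 'a set set) \<Rightarrow> nat \<Rightarrow> 'a set \<Rightarrow> nat \<Rightarrow> bool" where
  "dense_induced E i S d \<longleftrightarrow> (\<forall>v\<in>S. d \<le> card {u\<in>S. {u, v} \<in> E i})"

definition coherent_core :: "'a set \<Rightarrow> (nat \<Rightarrow> 'a set set) \<Rightarrow> nat \<Rightarrow> nat set \<Rightarrow> 'a set" where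
  "coherent_core V E d L = Greatest (\<lambda>S. S \<subseteq> V \<and> (\<forall>i\<in>L. dense_induced E i S d))"

text \<open>Top-down child relation: L' = L - {ell} with ell > max({1..l} - L), max {} = -infinity.\<close>
definition td_child :: "nat \<Rightarrow> nat set \<Rightarrow> nat set \<Rightarrow> bool" where
  "td_child l L L' \<longleftrightarrow> (\<exists>ell\<in>L. L' = L - {ell} \<and> (\<forall>j\<in>{1..l} - L. j < ell))"

definition td_descendant :: "nat \<Rightarrow> nat set \<Rightarrow> nat set \<Rightarrow> bool" where
  "td_descendant l = (td_child l)\<^sup>+\<^sup>+"

definition Cov :: "'a set set \<Rightarrow> 'a set" where
  "Cov R = \<Union>R"

definition Delta :: "'a set set \<Rightarrow> 'a set \<Rightarrow> 'a set" where
  "Delta R C' = C' - Cov (R - {C'})"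

definition is_cstar_rule :: "('a set set \<Rightarrow> 'a set) \<Rightarrow> bool" where
  "is_cstar_rule cstar \<longleftrightarrow> (\<forall>R. finite R \<and> R \<noteq> {} \<longrightarrow>
      cstar R \<in> R \<and> (\<forall>C\<in>R. card (Delta R (cstar R)) \<le> card (Delta R C)))"

definition updates :: "('a set set \<Rightarrow> 'a set) \<Rightarrow> nat \<Rightarrow> 'a set \<Rightarrow> 'a set set \<Rightarrow> bool" where
  "updates cstar k C R \<longleftrightarrow>
     real (card (Cov ((R - {cstar R}) \<union> {C}))) \<ge> (1 + 1 / real k) * real (card (Cov R))"

end

theory Submission
  imports Defs Complex_Main
begin

text \<open>Both cores lie in the potential vertex set U, so after swapping in the first core
  and then the second, the cover is contained in \<open>Cov(R - {C*(R)}) \<union> U\<close>, of size at most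
  \<open>|Cov R| - |\<Delta>| + |U|\<close>. The bound on \<open>|U|\<close> together with the growth \<open>|Cov R'| \<ge> (1 + 1/k)|Cov R|\<close>
  from the first update makes this strictly less than \<open>(1 + 1/k)|Cov R'|\<close>; the slack
  needed is exactly \<open>|\<Delta>| \<le> |Cov R|\<close>.\<close>

lemma card_Cov_eq_Delta:
  assumes "C \<in> R" and "finite (Cov R)"
  shows "card (Cov R) = card (Cov (R - {C})) + card (Delta R C)"
proof -
  have eq: "Cov R = Cov (R - {C}) \<union> Delta R C"
    using assms(1) by (auto simp: Cov_def Delta_def)
  have "finite (Cov (R - {C}))" "finite (Delta R C)"
    using assms(2) by (simp_all add: eq)
  moreover have "Cov (R - {C}) \<inter> Delta R C = {}"
    by (auto simp: Delta_def)
  ultimately show ?thesis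
    by (simp only: eq card_Un_disjoint)
qed

lemma card_Cov_swap_twice_le:
  assumes "finite (Cov R)" "finite U" "C1 \<subseteq> U" "C2 \<subseteq> U"
  shows "card (Cov ((((R - {C}) \<union> {C1}) - {X}) \<union> {C2})) \<le> card (Cov (R - {C})) + card U"
proof -
  have "Cov (R - {C}) \<subseteq> Cov R"
    by (auto simp: Cov_def)
  then have "finite (Cov (R - {C}))"
    using assms(1) by (rule finite_subset)
  moreover have "Cov ((((R - {C}) \<union> {C1}) - {X}) \<union> {C2}) \<subseteq> Cov (R - {C}) \<union> U"
    using assms(3,4) by (auto simp: Cov_def)
  ultimately have "card (Cov ((((R - {C}) \<union> {C1}) - {X}) \<union> {C2})) \<le> card (Cov (R - {C}) \<union> U)"
    using assms(2) by (intro card_mono) auto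
  also have "\<dots> \<le> card (Cov (R - {C})) + card U"
    by (rule card_Un_le)
  finally show ?thesis .
qed

lemma second_update_fails_arith:
  fixes t x \<delta> y u :: real
  assumes "t \<ge> 0" "0 \<le> \<delta>" "\<delta> \<le> x"
    and grow: "y \<ge> (1 + t) * x"
    and u: "u < (t + t\<^sup>2) * x + (1 + t) * \<delta>"
  shows "(x - \<delta>) + u < (1 + t) * y"
proof -
  have "(1 + t) * y \<ge> (1 + t) * ((1 + t) * x)"
    using grow assms(1) by (intro mult_left_mono) auto
  moreover have "t * \<delta> \<le> t * x"
    using assms(1,3) by (rule mult_left_mono[rotated])
  ultimately show ?thesis
    using u by (simp add: algebra_simps power2_eq_square)
qed

theorem lemma7:
  fixes V :: "'a set" and E :: "nat \<Rightarrow> 'a set set" and l d s k :: nat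
    and R :: "'a set set" and L S1 S2 :: "nat set" and U :: "'a set"
    and cstar :: "'a set set \<Rightarrow> 'a set"
  assumes G: "multilayer_graph V E l"
    and cs: "is_cstar_rule cstar"
    and k: "k \<ge> 1"
    and Rk: "card R = k" and RV: "\<forall>C\<in>R. C \<subseteq> V"
    and L: "L \<subseteq> {1..l}" and Ls: "card L > s"
    and UV: "U \<subseteq> V"
    and pot: "\<forall>S. td_descendant l L S \<and> card S = s \<longrightarrow> coherent_core V E d S \<subseteq> U"
    and upL: "real (card (Cov ((R - {cstar R}) \<union> {coherent_core V E d L})))
                \<ge> (1 + 1 / real k) * real (card (Cov R))"
    and Ubound: "real (card U) < (1 / real k + 1 / real k ^ 2) * real (card (Cov R))
                   + (1 + 1 / real k) * real (card (Delta R (cstar R)))"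
    and S1: "td_descendant l L S1" "card S1 = s"
    and S2: "td_descendant l L S2" "card S2 = s"
    and neq: "coherent_core V E d S1 \<noteq> coherent_core V E d S2"
    and up1: "real (card (Cov ((R - {cstar R}) \<union> {coherent_core V E d S1})))
                \<ge> (1 + 1 / real k) * real (card (Cov R))"
  shows "let R' = (R - {cstar R}) \<union> {coherent_core V E d S1} in
         real (card (Cov ((R' - {cstar R'}) \<union> {coherent_core V E d S2})))
           < (1 + 1 / real k) * real (card (Cov R'))"
proof -
  define R' where "R' = (R - {cstar R}) \<union> {coherent_core V E d S1}"
  have "finite V" using G by (simp add: multilayer_graph_def)
  moreover have "Cov R \<subseteq> V"
    using RV by (auto simp: Cov_def)
  ultimately have fin_Cov: "finite (Cov R)" and fin_U: "finite U"
    using UV by (auto intro: finite_subset)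
  have "finite R" "R \<noteq> {}"
    using Rk k by (auto intro: card_ge_0_finite)
  then have "cstar R \<in> R"
    using cs unfolding is_cstar_rule_def by blast
  then have split: "card (Cov R) = card (Cov (R - {cstar R})) + card (Delta R (cstar R))"
    using fin_Cov by (rule card_Cov_eq_Delta)
  have "card (Cov ((R' - {cstar R'}) \<union> {coherent_core V E d S2}))
          \<le> card (Cov (R - {cstar R})) + card U"
    unfolding R'_def using fin_Cov fin_U pot S1 S2 by (intro card_Cov_swap_twice_le) blast+
  moreover have "(real (card (Cov R)) - real (card (Delta R (cstar R)))) + real (card U)
                   < (1 + 1 / real k) * real (card (Cov R'))"
    using split up1 Ubound unfolding R'_def
    by (intro second_update_fails_arith) (auto simp: power_divide)
  ultimately show ?thesis
    using split by (simp add: Let_def R'_def)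
qed

end
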